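(* Let $(G,\cdot)$ be a finite group and $\psi\in\operatorname{End}(G,\cdot)$ with $\psi([[G,\psi],G])\le Z(G,\cdot)$. Let $\nu(g)\in\operatorname{Perm}(G)$ be $h\mapsto g\,\psi(g)^{-1}h\,\psi(g)$ and $N=\{\nu(g):g\in G\}$. Let $G_0=\ker\psi$ and $G_1=\{g\in G:\psi(g)=g\}$, and $N_0=\nu(G_0)$, $N_1=\nu(G_1)$. Then: (1) $N_0=\lambda(G_0)$, it is a normal subgroup of $N$ isomorphic to $(G_0,\cdot)$, and it is normalised by $\lambda(G)$; (2) $N_1=\rho(G_1)$, it is a subgroup of $N$ isomorphic to $(G_1,\cdot)$, and $\lambda(G)$ centralises it; (3) $N_{01}=N_0N_1=\nu(G_0\cdot G_1)$ is a subgroup of $N$, it is the internal direct product of $N_0$ and $N_1$ (so isomorphic to $(G_0,\cdot)\times(G_1,\cdot)$), and it is normalised by $\lambda(G)$; (4) $\lambda(G)\cap N=\{\lambda(g):\psi(g)\in Z(G,\cdot)\}$ and $\rho(G)\cap N=\{\rho(g):g\,\psi(g)^{-1}\in Z(G,\cdot)\}$, and both are subgroups of $N$ normalised by $\lambda(G)$, with $\lambda(G)$ centralising $\rho(G)\cap N$.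
   Context: $\operatorname{Perm}(G)$ is the group of permutations of the set $G$; $\lambda(g)(h)=g\cdot h$ and $\rho(g)(h)=h\cdot g^{-1}$ are the left and right regular representations. For $\psi\in\operatorname{End}(G,\cdot)$, $[g,\psi]=g\cdot\psi(g)^{-1}$ and $[G,\psi]$ is the subgroup generated by these elements; $[x,y]=xyx^{-1}y^{-1}$ and $[A,B]$ is the subgroup generated by $[a,b]$, $a\in A,b\in B$; $Z(G,\cdot)$ is the centre. Under the hypothesis, $N$ is a regular subgroup of $\operatorname{Perm}(G)$ normalised by $\lambda(G)$. *)

theory Defs
  imports "HOL-Algebra.Algebra"
begin

abbreviation Perm :: "('a, 'b) monoid_scheme \<Rightarrow> ('a \<Rightarrow> 'a) monoid" where
  "Perm G \<equiv> BijGroup (carrier G)"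

definition lreg :: "('a, 'b) monoid_scheme \<Rightarrow> 'a \<Rightarrow> ('a \<Rightarrow> 'a)" where
  "lreg G g = (\<lambda>h \<in> carrier G. g \<otimes>\<^bsub>G\<^esub> h)"

definition rreg :: "('a, 'b) monoid_scheme \<Rightarrow> 'a \<Rightarrow> ('a \<Rightarrow> 'a)" where
  "rreg G g = (\<lambda>h \<in> carrier G. h \<otimes>\<^bsub>G\<^esub> inv\<^bsub>G\<^esub> g)"

definition nu :: "('a, 'b) monoid_scheme \<Rightarrow> ('a \<Rightarrow> 'a) \<Rightarrow> 'a \<Rightarrow> ('a \<Rightarrow> 'a)" where
  "nu G f g = (\<lambda>h \<in> carrier G. g \<otimes>\<^bsub>G\<^esub> inv\<^bsub>G\<^esub> (f g) \<otimes>\<^bsub>G\<^esub> h \<otimes>\<^bsub>G\<^esub> f g)"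

definition group_center :: "('a, 'b) monoid_scheme \<Rightarrow> 'a set" where
  "group_center G = {z \<in> carrier G. \<forall>g \<in> carrier G. z \<otimes>\<^bsub>G\<^esub> g = g \<otimes>\<^bsub>G\<^esub> z}"

definition grp_comm :: "('a, 'b) monoid_scheme \<Rightarrow> 'a \<Rightarrow> 'a \<Rightarrow> 'a" where
  "grp_comm G x y = x \<otimes>\<^bsub>G\<^esub> y \<otimes>\<^bsub>G\<^esub> inv\<^bsub>G\<^esub> x \<otimes>\<^bsub>G\<^esub> inv\<^bsub>G\<^esub> y"

definition comm_subgroup :: "('a, 'b) monoid_scheme \<Rightarrow> 'a set \<Rightarrow> 'a set \<Rightarrow> 'a set" where
  "comm_subgroup G A B = generate G {grp_comm G a b | a b. a \<in> A \<and> b \<in> B}"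

definition psi_comm_subgroup :: "('a, 'b) monoid_scheme \<Rightarrow> ('a \<Rightarrow> 'a) \<Rightarrow> 'a set" where
  "psi_comm_subgroup G f = generate G {g \<otimes>\<^bsub>G\<^esub> inv\<^bsub>G\<^esub> (f g) | g. g \<in> carrier G}"

definition normalises :: "('c, 'd) monoid_scheme \<Rightarrow> 'c set \<Rightarrow> 'c set \<Rightarrow> bool" where
  "normalises P S T \<longleftrightarrow>
     (\<forall>x \<in> S. (\<lambda>y. x \<otimes>\<^bsub>P\<^esub> y \<otimes>\<^bsub>P\<^esub> inv\<^bsub>P\<^esub> x) ` T = T)"

definition centralises :: "('c, 'd) monoid_scheme \<Rightarrow> 'c set \<Rightarrow> 'c set \<Rightarrow> bool" where
  "centralises P S T \<longleftrightarrow> (\<forall>x \<in> S. \<forall>y \<in> T. x \<otimes>\<^bsub>P\<^esub> y = y \<otimes>\<^bsub>P\<^esub> x)"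

definition internal_direct_product :: "('c, 'd) monoid_scheme \<Rightarrow> 'c set \<Rightarrow> 'c set \<Rightarrow> 'c set \<Rightarrow> bool" where
  "internal_direct_product P H A B \<longleftrightarrow>
     subgroup H P \<and> A \<lhd> P\<lparr>carrier := H\<rparr> \<and> B \<lhd> P\<lparr>carrier := H\<rparr> \<and>
     A \<inter> B = {\<one>\<^bsub>P\<^esub>} \<and> A <#>\<^bsub>P\<^esub> B = H"

end

theory Submission
  imports Defs
begin

(* Every permutation occurring here is a two-sided translation h \<mapsto> c h d^-1, the image of
   (c, d) under a homomorphism lrreg from G \<times> G to Perm(G) whose kernel is the central
   diagonal {(z, z) | z \<in> Z(G)}. Thus \<nu>(g) = lrreg (g \<psi>(g)^-1, \<psi>(g)^-1), and lrreg (c, d) = \<nu>(m)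
   iff c = m d and \<psi>(m) d is central. When two \<nu>'s are multiplied, or \<nu>(g) is conjugated by
   \<lambda>(x), the element \<psi>(m) d that has to be central is the image under \<psi> of a commutator
   [g \<psi>(g)^-1, k]; so the hypothesis makes N a subgroup normalised by \<lambda>(G).
   On the kernel G0 and on the fixed points G1 of \<psi>, \<nu> becomes \<lambda> and \<rho> \<circ> inv, so N0, N1 and
   N0 N1 are the images of G0 \<times> 1, 1 \<times> G1 and G0 \<times> G1. Since G0 \<inter> G1 = 1, lrreg is injective
   on these subgroups, which gives the isomorphisms and the direct product decomposition. *)

section \<open>Normalisers, images and internal direct products\<close>

lemma (in group_hom) subgroup_image_iso:
  assumes "subgroup I G" "inj_on h I"
  shows "H\<lparr>carrier := h ` I\<rparr> \<cong> G\<lparr>carrier := I\<rparr>"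
proof -
  interpret I: group_hom "G\<lparr>carrier := I\<rparr>" H h
    using assms(1) by (rule induced_group_hom')
  have sub: "subgroup (h ` I) H"
    using I.img_is_subgroup by simp
  have "h \<in> iso (G\<lparr>carrier := I\<rparr>) (subgroup_generated H (h ` I))"
    using Generated_Groups.iso_onto_image[OF I.G.is_group H.is_group, of h] I.homh assms(2) by simp
  moreover have "subgroup_generated H (h ` I) = H\<lparr>carrier := h ` I\<rparr>"
    using subgroup.carrier_subgroup_generated_subgroup[OF sub] by (simp add: subgroup_generated_def)
  ultimately have "h \<in> iso (G\<lparr>carrier := I\<rparr>) (H\<lparr>carrier := h ` I\<rparr>)"
    by simp
  then show ?thesis
    by (blast intro: is_isoI group.iso_sym I.G.is_group)
qed

lemma normalises_DirProd:
  assumes "group G" "group K" "normalises G U A" "normalises K V B"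
    and "U \<subseteq> carrier G" "V \<subseteq> carrier K"
  shows "normalises (G \<times>\<times> K) (U \<times> V) (A \<times> B)"
  unfolding normalises_def
proof (clarify)
  fix x y assume "x \<in> U" "y \<in> V"
  then have conj: "(\<lambda>p. (x, y) \<otimes>\<^bsub>G \<times>\<times> K\<^esub> p \<otimes>\<^bsub>G \<times>\<times> K\<^esub> inv\<^bsub>G \<times>\<times> K\<^esub> (x, y))
      = map_prod (\<lambda>a. x \<otimes>\<^bsub>G\<^esub> a \<otimes>\<^bsub>G\<^esub> inv\<^bsub>G\<^esub> x) (\<lambda>b. y \<otimes>\<^bsub>K\<^esub> b \<otimes>\<^bsub>K\<^esub> inv\<^bsub>K\<^esub> y)"
    using assms \<open>x \<in> U\<close> \<open>y \<in> V\<close> by (auto simp: mult_DirProd' inv_DirProd subsetD)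
  show "(\<lambda>p. (x, y) \<otimes>\<^bsub>G \<times>\<times> K\<^esub> p \<otimes>\<^bsub>G \<times>\<times> K\<^esub> inv\<^bsub>G \<times>\<times> K\<^esub> (x, y)) ` (A \<times> B) = A \<times> B"
    unfolding conj using assms(3,4) \<open>x \<in> U\<close> \<open>y \<in> V\<close>
    by (intro map_prod_surj_on) (simp_all add: normalises_def)
qed

lemma normalises_subset: "normalises P S T \<Longrightarrow> S' \<subseteq> S \<Longrightarrow> normalises P S' T"
  unfolding normalises_def by (meson subsetD)

lemma (in group_hom) normalises_image:
  assumes "normalises G S T" "S \<subseteq> carrier G" "T \<subseteq> carrier G"
  shows "normalises H (h ` S) (h ` T)"
  unfolding normalises_def
proof (clarify)
  fix s assume s: "s \<in> S"
  have "(\<lambda>y. h s \<otimes>\<^bsub>H\<^esub> y \<otimes>\<^bsub>H\<^esub> inv\<^bsub>H\<^esub> h s) ` h ` T = h ` (\<lambda>t. s \<otimes> t \<otimes> inv s) ` T"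
    unfolding image_image using assms(2,3) s by (intro image_cong) (auto simp: subset_iff)
  then show "(\<lambda>y. h s \<otimes>\<^bsub>H\<^esub> y \<otimes>\<^bsub>H\<^esub> inv\<^bsub>H\<^esub> h s) ` h ` T = h ` T"
    using assms(1) s by (simp add: normalises_def)
qed

context group
begin

lemma m_inv_cancel_left [simp]: "x \<in> carrier G \<Longrightarrow> y \<in> carrier G \<Longrightarrow> x \<otimes> (inv x \<otimes> y) = y"
  by (simp add: m_assoc [symmetric])

lemma inv_m_cancel_left [simp]: "x \<in> carrier G \<Longrightarrow> y \<in> carrier G \<Longrightarrow> inv x \<otimes> (x \<otimes> y) = y"
  by (simp add: m_assoc [symmetric])

lemma group_centerD:
  assumes "z \<in> group_center G"
  shows "z \<in> carrier G" "\<And>g. g \<in> carrier G \<Longrightarrow> z \<otimes> g = g \<otimes> z"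
  using assms by (auto simp: group_center_def)

lemma group_center_inv:
  assumes z: "z \<in> group_center G"
  shows "inv z \<in> group_center G"
proof -
  have "inv z \<otimes> g = g \<otimes> inv z" if "g \<in> carrier G" for g
  proof -
    have "inv z \<otimes> g = inv z \<otimes> (g \<otimes> z) \<otimes> inv z"
      using that group_centerD(1)[OF z] by (simp add: m_assoc)
    also have "\<dots> = inv z \<otimes> (z \<otimes> g) \<otimes> inv z"
      using that by (simp add: group_centerD(2)[OF z])
    also have "\<dots> = g \<otimes> inv z"
      using that group_centerD(1)[OF z] by (simp add: m_assoc)
    finally show ?thesis .
  qed
  then show ?thesis using group_centerD(1)[OF z] by (simp add: group_center_def)
qed

lemma group_center_swap:
  assumes "x \<in> carrier G" "y \<in> carrier G" "x \<otimes> y \<in> group_center G"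
  shows "y \<otimes> x \<in> group_center G"
proof -
  have "y \<otimes> x = inv x \<otimes> ((x \<otimes> y) \<otimes> x)"
    using assms by (simp add: m_assoc)
  also have "\<dots> = inv x \<otimes> (x \<otimes> (x \<otimes> y))"
    by (simp add: group_centerD(2)[OF assms(3,1)])
  also have "\<dots> = x \<otimes> y"
    using assms by simp
  finally show ?thesis using assms(3) by simp
qed

lemma normalisesI:
  assumes "S \<subseteq> carrier G" "T \<subseteq> carrier G"
    and "\<And>s t. s \<in> S \<Longrightarrow> t \<in> T \<Longrightarrow> s \<otimes> t \<otimes> inv s \<in> T"
    and "\<And>s t. s \<in> S \<Longrightarrow> t \<in> T \<Longrightarrow> inv s \<otimes> t \<otimes> s \<in> T"
  shows "normalises G S T"
  unfolding normalises_def
proof (intro ballI equalityI subsetI)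
  fix s t assume "s \<in> S" "t \<in> T"
  then have "s \<in> carrier G" "t \<in> carrier G"
    using assms(1,2) by auto
  then have "t = s \<otimes> (inv s \<otimes> t \<otimes> s) \<otimes> inv s"
    by (simp add: m_assoc)
  then show "t \<in> (\<lambda>y. s \<otimes> y \<otimes> inv s) ` T"
    using assms(4) \<open>s \<in> S\<close> \<open>t \<in> T\<close> by blast
qed (use assms(3) in auto)

lemma subgroup_normalises:
  assumes "subgroup H G" "S \<subseteq> H"
  shows "normalises G S H"
  using assms subgroup.subset[OF assms(1)]
  by (intro normalisesI) (auto simp: subgroup.m_closed subgroup.m_inv_closed)

lemma normal_normalises:
  assumes "N \<lhd> G" "S \<subseteq> carrier G"
  shows "normalises G S N"
proof (rule normalisesI)
  show "N \<subseteq> carrier G"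
    using assms(1) normal_imp_subgroup subgroup.subset by blast
next
  fix s t assume "s \<in> S" "t \<in> N"
  then show "s \<otimes> t \<otimes> inv s \<in> N" "inv s \<otimes> t \<otimes> s \<in> N"
    using assms subsetD normal.inv_op_closed1 normal.inv_op_closed2 by metis+
qed fact

lemma normalises_Int:
  assumes "normalises G S T" "normalises G S T'" "S \<subseteq> carrier G" "T \<subseteq> carrier G" "T' \<subseteq> carrier G"
  shows "normalises G S (T \<inter> T')"
  unfolding normalises_def
proof (clarify)
  fix s assume s: "s \<in> S"
  have "inj_on (\<lambda>y. s \<otimes> y \<otimes> inv s) (carrier G)"
    using subsetD[OF assms(3) s] by (intro inj_onI) simp
  then have "inj_on (\<lambda>y. s \<otimes> y \<otimes> inv s) (T \<union> T')"
    by (rule inj_on_subset) (use assms(4,5) in blast)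
  then show "(\<lambda>y. s \<otimes> y \<otimes> inv s) ` (T \<inter> T') = T \<inter> T'"
    using assms(1,2) s by (simp add: inj_on_image_Int normalises_def)
qed

lemma normal_in_subgroupI:
  assumes "subgroup H G" "subgroup T G" "T \<subseteq> H" "normalises G H T"
  shows "T \<lhd> G\<lparr>carrier := H\<rparr>"
proof -
  interpret H: group "G\<lparr>carrier := H\<rparr>"
    using assms(1) by (rule subgroup_imp_group)
  show ?thesis
    unfolding H.normal_inv_iff
    using assms subgroup_incl m_inv_consistent by (auto simp: normalises_def)
qed

lemma internal_direct_productI:
  assumes AB: "subgroup (A <#> B) G" and A: "subgroup A G" and B: "subgroup B G"
    and disj: "A \<inter> B \<subseteq> {\<one>}" and comm: "\<And>x y. x \<in> A \<Longrightarrow> y \<in> B \<Longrightarrow> x \<otimes> y = y \<otimes> x"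
  shows "internal_direct_product G (A <#> B) A B"
proof -
  let ?H = "G\<lparr>carrier := A <#> B\<rparr>"
  have "A \<subseteq> A <#> B"
  proof
    fix x assume x: "x \<in> A"
    then have "x \<otimes> \<one> \<in> A <#> B"
      using B subgroup.one_closed unfolding set_mult_def by blast
    then show "x \<in> A <#> B"
      using subgroup.mem_carrier[OF A x] by simp
  qed
  moreover have "B \<subseteq> A <#> B"
  proof
    fix x assume x: "x \<in> B"
    then have "\<one> \<otimes> x \<in> A <#> B"
      using A subgroup.one_closed unfolding set_mult_def by blast
    then show "x \<in> A <#> B"
      using subgroup.mem_carrier[OF B x] by simp
  qed
  ultimately have H: "group_disjoint_sum ?H A B"
    using AB A B by (simp add: group_disjoint_sum_def subgroup_imp_group subgroup_incl)
  have "carrier ?H \<subseteq> A <#>\<^bsub>?H\<^esub> B"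
    by (simp add: set_mult_def)
  then have "A \<lhd> ?H" "B \<lhd> ?H"
    using group_disjoint_sum.commuting_imp_normal1[OF H] group_disjoint_sum.commuting_imp_normal2[OF H]
      comm by auto
  moreover have "A \<inter> B = {\<one>}"
    using A B disj subgroup.one_closed by blast
  ultimately show ?thesis
    using AB by (simp add: internal_direct_product_def)
qed

lemma subgroup_image_inv:
  assumes "subgroup H G"
  shows "m_inv G ` H = H"
proof
  show "m_inv G ` H \<subseteq> H"
    using subgroup.m_inv_closed[OF assms] by (rule image_subsetI)
  show "H \<subseteq> m_inv G ` H"
  proof
    fix h assume "h \<in> H"
    then have "h = inv (inv h)" "inv h \<in> H"
      using assms by (simp_all add: subgroup.mem_carrier subgroup.m_inv_closed)
    then show "h \<in> m_inv G ` H"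
      by blast
  qed
qed

end

section \<open>Two-sided translations\<close>

definition lrreg :: "('a, 'b) monoid_scheme \<Rightarrow> 'a \<times> 'a \<Rightarrow> ('a \<Rightarrow> 'a)" where
  "lrreg G p = (\<lambda>h \<in> carrier G. fst p \<otimes>\<^bsub>G\<^esub> h \<otimes>\<^bsub>G\<^esub> inv\<^bsub>G\<^esub> snd p)"

context group
begin

lemma lreg_eq_lrreg: "g \<in> carrier G \<Longrightarrow> lreg G g = lrreg G (g, \<one>)"
  by (auto simp: lreg_def lrreg_def intro!: restrict_ext)

lemma rreg_eq_lrreg: "rreg G g = lrreg G (\<one>, g)"
  by (auto simp: rreg_def lrreg_def intro!: restrict_ext)

lemma nu_eq_lrreg:
  "g \<in> carrier G \<Longrightarrow> f g \<in> carrier G \<Longrightarrow> nu G f g = lrreg G (g \<otimes> inv (f g), inv (f g))"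
  by (auto simp: nu_def lrreg_def intro!: restrict_ext)

lemma lrreg_in_Perm:
  assumes "c \<in> carrier G" "d \<in> carrier G"
  shows "lrreg G (c, d) \<in> carrier (Perm G)"
proof -
  have "bij_betw (lrreg G (c, d)) (carrier G) (carrier G)"
    using assms
    by (intro bij_betw_byWitness[where f' = "\<lambda>h. inv c \<otimes> h \<otimes> d"]) (auto simp: lrreg_def m_assoc)
  then show ?thesis
    by (simp add: BijGroup_def Bij_def lrreg_def)
qed

lemma lrreg_hom: "lrreg G \<in> hom (G \<times>\<times> G) (Perm G)"
proof (rule homI)
  fix p q assume "p \<in> carrier (G \<times>\<times> G)" "q \<in> carrier (G \<times>\<times> G)"
  then show "lrreg G (p \<otimes>\<^bsub>G \<times>\<times> G\<^esub> q) = lrreg G p \<otimes>\<^bsub>Perm G\<^esub> lrreg G q"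
    using lrreg_in_Perm[of "fst p" "snd p"] lrreg_in_Perm[of "fst q" "snd q"]
    by (auto simp: BijGroup_def compose_def lrreg_def mult_DirProd' m_assoc inv_mult_group
        intro!: restrict_ext)
qed (auto simp: lrreg_in_Perm)

lemma group_hom_lrreg: "group_hom (G \<times>\<times> G) (Perm G) (lrreg G)"
  by (simp add: group_hom_def group_hom_axioms_def DirProd_group is_group group_BijGroup lrreg_hom)

lemma lrreg_eq_iff:
  assumes "c \<in> carrier G" "d \<in> carrier G" "c' \<in> carrier G" "d' \<in> carrier G"
  shows "lrreg G (c, d) = lrreg G (c', d') \<longleftrightarrow> (\<exists>z \<in> group_center G. c = c' \<otimes> z \<and> d = d' \<otimes> z)"
proof
  assume eq: "lrreg G (c, d) = lrreg G (c', d')"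
  have pt: "c \<otimes> h \<otimes> inv d = c' \<otimes> h \<otimes> inv d'" if "h \<in> carrier G" for h
    using fun_cong[OF eq, of h] that by (simp add: lrreg_def)
  define z where "z = inv c' \<otimes> c"
  have zc: "z \<in> carrier G" and c: "c = c' \<otimes> z"
    using assms by (simp_all add: z_def)
  have d: "d = d' \<otimes> z"
  proof -
    have e: "c \<otimes> inv d = c' \<otimes> inv d'"
      using pt[of \<one>] assms by simp
    have "d' \<otimes> z = d' \<otimes> (inv c' \<otimes> (c \<otimes> inv d) \<otimes> d)"
      using assms by (simp add: z_def m_assoc)
    also have "\<dots> = d"
      using assms by (simp add: e m_assoc)
    finally show ?thesis by simp
  qed
  have "z \<otimes> h = h \<otimes> z" if h: "h \<in> carrier G" for h
  proof -
    have "c' \<otimes> (z \<otimes> h) \<otimes> inv d = c' \<otimes> h \<otimes> inv d'"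
      using pt[OF h] assms zc h by (simp add: c m_assoc)
    also have "\<dots> = c' \<otimes> (h \<otimes> z) \<otimes> inv d"
      using assms zc h by (simp add: d m_assoc inv_mult_group)
    finally show ?thesis
      using assms zc h by simp
  qed
  then show "\<exists>z \<in> group_center G. c = c' \<otimes> z \<and> d = d' \<otimes> z"
    using zc c d by (auto simp: group_center_def)
next
  assume "\<exists>z \<in> group_center G. c = c' \<otimes> z \<and> d = d' \<otimes> z"
  then obtain z where z: "z \<in> group_center G" and cd: "c = c' \<otimes> z" "d = d' \<otimes> z"
    by blast
  have "c' \<otimes> z \<otimes> h \<otimes> inv (d' \<otimes> z) = c' \<otimes> h \<otimes> inv d'" if "h \<in> carrier G" for h
    using assms that group_centerD[OF z] by (simp add: inv_mult_group m_assoc)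
  then show "lrreg G (c, d) = lrreg G (c', d')"
    by (auto simp: lrreg_def cd intro!: restrict_ext)
qed

lemma inj_on_lrreg:
  assumes A: "subgroup A G" and B: "subgroup B G" and disj: "A \<inter> B \<subseteq> {\<one>}"
  shows "inj_on (lrreg G) (A \<times> B)"
proof (rule inj_onI)
  fix p q assume p: "p \<in> A \<times> B" and q: "q \<in> A \<times> B" and eq: "lrreg G p = lrreg G q"
  obtain a b a' b' where pq: "p = (a, b)" "q = (a', b')" and ab: "a \<in> A" "b \<in> B" "a' \<in> A" "b' \<in> B"
    using p q by blast
  have carr: "a \<in> carrier G" "b \<in> carrier G" "a' \<in> carrier G" "b' \<in> carrier G"
    using ab subgroup.mem_carrier[OF A] subgroup.mem_carrier[OF B] by blast+
  obtain z where z: "z \<in> group_center G" and a: "a = a' \<otimes> z" and b: "b = b' \<otimes> z"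
    using eq unfolding pq lrreg_eq_iff[OF carr] by blast
  have zc: "z \<in> carrier G"
    using z by (rule group_centerD(1))
  have "inv a' \<otimes> a = z" "inv b' \<otimes> b = z"
    unfolding a b using carr zc by simp_all
  moreover have "inv a' \<otimes> a \<in> A" "inv b' \<otimes> b \<in> B"
    using ab subgroup.m_closed subgroup.m_inv_closed A B by metis+
  ultimately have "z \<in> A \<inter> B"
    by simp
  then have "z = \<one>"
    using disj by blast
  then show "p = q"
    unfolding pq a b using carr by simp
qed

lemma lrreg_eq_nu_iff:
  assumes "c \<in> carrier G" "d \<in> carrier G" "m \<in> carrier G" "f m \<in> carrier G"
  shows "lrreg G (c, d) = nu G f m \<longleftrightarrow> c = m \<otimes> d \<and> f m \<otimes> d \<in> group_center G"
proof -
  have "lrreg G (c, d) = nu G f m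
      \<longleftrightarrow> (\<exists>z \<in> group_center G. c = m \<otimes> inv (f m) \<otimes> z \<and> d = inv (f m) \<otimes> z)"
    using assms by (simp add: nu_eq_lrreg lrreg_eq_iff)
  also have "\<dots> \<longleftrightarrow> c = m \<otimes> d \<and> f m \<otimes> d \<in> group_center G"
  proof
    assume "\<exists>z \<in> group_center G. c = m \<otimes> inv (f m) \<otimes> z \<and> d = inv (f m) \<otimes> z"
    then obtain z where "z \<in> group_center G" "c = m \<otimes> inv (f m) \<otimes> z" "d = inv (f m) \<otimes> z"
      by blast
    then show "c = m \<otimes> d \<and> f m \<otimes> d \<in> group_center G"
      using assms group_centerD(1) by (simp add: m_assoc)
  next
    assume "c = m \<otimes> d \<and> f m \<otimes> d \<in> group_center G"
    then show "\<exists>z \<in> group_center G. c = m \<otimes> inv (f m) \<otimes> z \<and> d = inv (f m) \<otimes> z"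
      using assms by (intro bexI[of _ "f m \<otimes> d"]) (simp_all add: m_assoc)
  qed
  finally show ?thesis .
qed

lemma lreg_hom: "lreg G \<in> hom G (Perm G)"
proof (rule homI)
  fix x y assume "x \<in> carrier G" "y \<in> carrier G"
  then show "lreg G (x \<otimes> y) = lreg G x \<otimes>\<^bsub>Perm G\<^esub> lreg G y"
    using hom_mult[OF lrreg_hom, of "(x, \<one>)" "(y, \<one>)"] by (simp add: lreg_eq_lrreg)
qed (simp add: lreg_eq_lrreg lrreg_in_Perm)

lemma rreg_hom: "rreg G \<in> hom G (Perm G)"
proof (rule homI)
  fix x y assume "x \<in> carrier G" "y \<in> carrier G"
  then show "rreg G (x \<otimes> y) = rreg G x \<otimes>\<^bsub>Perm G\<^esub> rreg G y"
    using hom_mult[OF lrreg_hom, of "(\<one>, x)" "(\<one>, y)"] by (simp add: rreg_eq_lrreg)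
qed (simp add: rreg_eq_lrreg lrreg_in_Perm)

lemma group_hom_lreg: "group_hom G (Perm G) (lreg G)"
  by (simp add: group_hom_def group_hom_axioms_def is_group group_BijGroup lreg_hom)

lemma group_hom_rreg: "group_hom G (Perm G) (rreg G)"
  by (simp add: group_hom_def group_hom_axioms_def is_group group_BijGroup rreg_hom)

lemma inj_on_lreg: "inj_on (lreg G) (carrier G)"
proof (rule inj_onI)
  fix x y assume xy: "x \<in> carrier G" "y \<in> carrier G" and "lreg G x = lreg G y"
  then have "lreg G x \<one> = lreg G y \<one>"
    by simp
  then show "x = y"
    using xy by (simp add: lreg_def)
qed

lemma inj_on_rreg: "inj_on (rreg G) (carrier G)"
proof (rule inj_onI)
  fix x y assume xy: "x \<in> carrier G" "y \<in> carrier G" and "rreg G x = rreg G y"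
  then have "rreg G x \<one> = rreg G y \<one>"
    by simp
  then show "x = y"
    using xy inv_inj by (simp add: rreg_def inj_on_eq_iff)
qed

lemma lreg_rreg_commute:
  assumes "x \<in> carrier G" "y \<in> carrier G"
  shows "lreg G x \<otimes>\<^bsub>Perm G\<^esub> rreg G y = rreg G y \<otimes>\<^bsub>Perm G\<^esub> lreg G x"
  using assms hom_mult[OF lrreg_hom, of "(x, \<one>)" "(\<one>, y)"] hom_mult[OF lrreg_hom, of "(\<one>, y)" "(x, \<one>)"]
  by (simp add: lreg_eq_lrreg rreg_eq_lrreg)

lemma lreg_image: "A \<subseteq> carrier G \<Longrightarrow> lreg G ` A = lrreg G ` (A \<times> {\<one>})"
  by (force simp: lreg_eq_lrreg)

lemma rreg_image: "rreg G ` B = lrreg G ` ({\<one>} \<times> B)"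
  by (force simp: rreg_eq_lrreg)

lemma lreg_rreg_set_mult:
  assumes "A \<subseteq> carrier G" "B \<subseteq> carrier G"
  shows "lreg G ` A <#>\<^bsub>Perm G\<^esub> rreg G ` B = lrreg G ` (A \<times> B)"
proof -
  have "(A \<times> {\<one>}) <#>\<^bsub>G \<times>\<times> G\<^esub> ({\<one>} \<times> B) = A \<times> B"
    using assms by (force simp: set_mult_def)
  moreover have "lrreg G ` ((A \<times> {\<one>}) <#>\<^bsub>G \<times>\<times> G\<^esub> ({\<one>} \<times> B))
      = lrreg G ` (A \<times> {\<one>}) <#>\<^bsub>Perm G\<^esub> lrreg G ` ({\<one>} \<times> B)"
    by (rule set_mult_hom[OF lrreg_hom]) (use assms in auto)
  ultimately show ?thesis
    using assms by (simp add: lreg_image rreg_image)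
qed

lemma lrreg_image_normalises:
  assumes "normalises G U A" "normalises G V B"
    and "U \<subseteq> carrier G" "V \<subseteq> carrier G" "A \<subseteq> carrier G" "B \<subseteq> carrier G"
  shows "normalises (Perm G) (lrreg G ` (U \<times> V)) (lrreg G ` (A \<times> B))"
proof (rule group_hom.normalises_image[OF group_hom_lrreg])
  show "normalises (G \<times>\<times> G) (U \<times> V) (A \<times> B)"
    using assms(1-4) by (rule normalises_DirProd[OF is_group is_group])
qed (use assms in auto)

end

section \<open>The permutations \<nu>(g)\<close>

locale endo_central_commutators = group G for G (structure) +
  fixes \<psi> :: "'a \<Rightarrow> 'a"
  assumes endo: "\<psi> \<in> hom G G"
    and commutators_central: "\<psi> ` comm_subgroup G (psi_comm_subgroup G \<psi>) (carrier G) \<subseteq> group_center G"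
begin

lemma group_hom_psi: "group_hom G G \<psi>"
  by (simp add: group_hom_def group_hom_axioms_def endo is_group)

lemma psi_closed [simp]: "x \<in> carrier G \<Longrightarrow> \<psi> x \<in> carrier G"
  by (rule group_hom.hom_closed[OF group_hom_psi])

lemma psi_mult [simp]: "x \<in> carrier G \<Longrightarrow> y \<in> carrier G \<Longrightarrow> \<psi> (x \<otimes> y) = \<psi> x \<otimes> \<psi> y"
  by (rule group_hom.hom_mult[OF group_hom_psi])

lemma psi_one [simp]: "\<psi> \<one> = \<one>"
  by (rule group_hom.hom_one[OF group_hom_psi])

lemma psi_inv [simp]: "x \<in> carrier G \<Longrightarrow> \<psi> (inv x) = inv (\<psi> x)"
  by (rule group_hom.hom_inv[OF group_hom_psi])

lemma psi_commutator_central: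
  assumes "g \<in> carrier G" "k \<in> carrier G"
  shows "\<psi> (grp_comm G (g \<otimes> inv (\<psi> g)) k) \<in> group_center G"
proof -
  have "g \<otimes> inv (\<psi> g) \<in> psi_comm_subgroup G \<psi>"
    unfolding psi_comm_subgroup_def using assms by (blast intro: generate.incl)
  then have "grp_comm G (g \<otimes> inv (\<psi> g)) k \<in> comm_subgroup G (psi_comm_subgroup G \<psi>) (carrier G)"
    unfolding comm_subgroup_def using assms by (blast intro: generate.incl)
  then show ?thesis
    using commutators_central by blast
qed

lemma nu_mult:
  assumes g: "g \<in> carrier G" and k: "k \<in> carrier G"
  shows "nu G \<psi> g \<otimes>\<^bsub>Perm G\<^esub> nu G \<psi> k = nu G \<psi> (g \<otimes> inv (\<psi> g) \<otimes> k \<otimes> \<psi> g)"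
proof -
  let ?u = "g \<otimes> inv (\<psi> g)" and ?d = "inv (\<psi> g) \<otimes> inv (\<psi> k)"
  have "nu G \<psi> g \<otimes>\<^bsub>Perm G\<^esub> nu G \<psi> k = lrreg G (?u \<otimes> (k \<otimes> inv (\<psi> k)), ?d)"
    using g k hom_mult[OF lrreg_hom, of "(?u, inv (\<psi> g))" "(k \<otimes> inv (\<psi> k), inv (\<psi> k))"]
    by (simp add: nu_eq_lrreg)
  also have "\<dots> = nu G \<psi> (?u \<otimes> k \<otimes> \<psi> g)"
  proof (subst lrreg_eq_nu_iff)
    have "\<psi> (?u \<otimes> k \<otimes> \<psi> g) \<otimes> ?d = \<psi> (grp_comm G ?u k)"
      using g k by (simp add: grp_comm_def m_assoc inv_mult_group)
    then show "?u \<otimes> (k \<otimes> inv (\<psi> k)) = ?u \<otimes> k \<otimes> \<psi> g \<otimes> ?d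
        \<and> \<psi> (?u \<otimes> k \<otimes> \<psi> g) \<otimes> ?d \<in> group_center G"
      using g k psi_commutator_central by (simp add: m_assoc)
  qed (use g k in simp_all)
  finally show ?thesis .
qed

lemma nu_one: "nu G \<psi> \<one> = \<one>\<^bsub>Perm G\<^esub>"
  using group_hom.hom_one[OF group_hom_lrreg] by (simp add: nu_eq_lrreg)

lemma nu_in_Perm: "g \<in> carrier G \<Longrightarrow> nu G \<psi> g \<in> carrier (Perm G)"
  by (simp add: nu_eq_lrreg lrreg_in_Perm)

lemma nu_image_subgroup: "subgroup (nu G \<psi> ` carrier G) (Perm G)"
proof (rule group.subgroupI[OF group_BijGroup])
  show "nu G \<psi> ` carrier G \<subseteq> carrier (Perm G)"
    using nu_in_Perm by blast
next
  fix x assume "x \<in> nu G \<psi> ` carrier G"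
  then obtain g where g: "g \<in> carrier G" "x = nu G \<psi> g"
    by blast
  let ?k = "\<psi> g \<otimes> inv g \<otimes> inv (\<psi> g)"
  have "nu G \<psi> g \<otimes>\<^bsub>Perm G\<^esub> nu G \<psi> ?k = \<one>\<^bsub>Perm G\<^esub>"
    using g by (simp add: nu_mult m_assoc nu_one)
  then have "inv\<^bsub>Perm G\<^esub> x = nu G \<psi> ?k"
    using g group.inv_equality[OF group_BijGroup] group.inv_comm[OF group_BijGroup] nu_in_Perm
    by (metis m_closed inv_closed psi_closed)
  then show "inv\<^bsub>Perm G\<^esub> x \<in> nu G \<psi> ` carrier G"
    using g by simp
next
  fix x y assume "x \<in> nu G \<psi> ` carrier G" "y \<in> nu G \<psi> ` carrier G"
  then show "x \<otimes>\<^bsub>Perm G\<^esub> y \<in> nu G \<psi> ` carrier G"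
    using nu_mult by auto
qed blast

lemma lreg_conj_nu:
  assumes x: "x \<in> carrier G" and g: "g \<in> carrier G"
  shows "lreg G x \<otimes>\<^bsub>Perm G\<^esub> nu G \<psi> g \<otimes>\<^bsub>Perm G\<^esub> inv\<^bsub>Perm G\<^esub> lreg G x
    = nu G \<psi> (x \<otimes> (g \<otimes> inv (\<psi> g)) \<otimes> inv x \<otimes> \<psi> g)"
proof -
  let ?u = "g \<otimes> inv (\<psi> g)"
  have "lreg G x \<otimes>\<^bsub>Perm G\<^esub> nu G \<psi> g \<otimes>\<^bsub>Perm G\<^esub> inv\<^bsub>Perm G\<^esub> lreg G x
      = lrreg G (x \<otimes> ?u \<otimes> inv x, inv (\<psi> g))"
    using x g group_hom.hom_inv[OF group_hom_lrreg, of "(x, \<one>)"]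
      hom_mult[OF lrreg_hom, of "(x, \<one>)" "(?u, inv (\<psi> g))"]
      hom_mult[OF lrreg_hom, of "(x \<otimes> ?u, inv (\<psi> g))" "(inv x, \<one>)"]
    by (simp add: lreg_eq_lrreg nu_eq_lrreg)
  also have "\<dots> = nu G \<psi> (x \<otimes> ?u \<otimes> inv x \<otimes> \<psi> g)"
  proof (subst lrreg_eq_nu_iff)
    have "\<psi> (x \<otimes> ?u \<otimes> inv x \<otimes> \<psi> g) \<otimes> inv (\<psi> g) = inv (\<psi> (grp_comm G ?u x))"
      using x g by (simp add: grp_comm_def m_assoc inv_mult_group)
    then show "x \<otimes> ?u \<otimes> inv x = x \<otimes> ?u \<otimes> inv x \<otimes> \<psi> g \<otimes> inv (\<psi> g)
        \<and> \<psi> (x \<otimes> ?u \<otimes> inv x \<otimes> \<psi> g) \<otimes> inv (\<psi> g) \<in> group_center G"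
      using x g psi_commutator_central group_center_inv by (simp add: m_assoc)
  qed (use x g in simp_all)
  finally show ?thesis .
qed

lemma lreg_normalises_nu_image: "normalises (Perm G) (lreg G ` carrier G) (nu G \<psi> ` carrier G)"
proof (rule group.normalisesI[OF group_BijGroup])
  fix s t assume "s \<in> lreg G ` carrier G" "t \<in> nu G \<psi> ` carrier G"
  then obtain x g where x: "x \<in> carrier G" "s = lreg G x" and g: "g \<in> carrier G" "t = nu G \<psi> g"
    by blast
  have "inv\<^bsub>Perm G\<^esub> s = lreg G (inv x)"
    using x group_hom.hom_inv[OF group_hom_lreg, of x] by simp
  moreover have "inv\<^bsub>Perm G\<^esub> lreg G (inv x) = s"
    using x group_hom.hom_inv[OF group_hom_lreg, of "inv x"] by simp
  ultimately have "inv\<^bsub>Perm G\<^esub> s \<otimes>\<^bsub>Perm G\<^esub> t \<otimes>\<^bsub>Perm G\<^esub> s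
      = lreg G (inv x) \<otimes>\<^bsub>Perm G\<^esub> t \<otimes>\<^bsub>Perm G\<^esub> inv\<^bsub>Perm G\<^esub> lreg G (inv x)"
    by simp
  then show "s \<otimes>\<^bsub>Perm G\<^esub> t \<otimes>\<^bsub>Perm G\<^esub> inv\<^bsub>Perm G\<^esub> s \<in> nu G \<psi> ` carrier G"
    "inv\<^bsub>Perm G\<^esub> s \<otimes>\<^bsub>Perm G\<^esub> t \<otimes>\<^bsub>Perm G\<^esub> s \<in> nu G \<psi> ` carrier G"
    using x g by (simp_all add: lreg_conj_nu)
qed (use nu_in_Perm group_hom.hom_closed[OF group_hom_lreg] in auto)

lemma lreg_in_nu_image_iff:
  "k \<in> carrier G \<Longrightarrow> lreg G k \<in> nu G \<psi> ` carrier G \<longleftrightarrow> \<psi> k \<in> group_center G"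
  by (simp add: image_iff lreg_eq_lrreg lrreg_eq_nu_iff)

lemma rreg_in_nu_image_iff:
  assumes k: "k \<in> carrier G"
  shows "rreg G k \<in> nu G \<psi> ` carrier G \<longleftrightarrow> k \<otimes> inv (\<psi> k) \<in> group_center G"
proof -
  have "rreg G k \<in> nu G \<psi> ` carrier G \<longleftrightarrow> (\<exists>g \<in> carrier G. \<one> = g \<otimes> k \<and> \<psi> g \<otimes> k \<in> group_center G)"
    using k by (simp add: image_iff rreg_eq_lrreg lrreg_eq_nu_iff)
  also have "\<dots> \<longleftrightarrow> inv (\<psi> k) \<otimes> k \<in> group_center G"
  proof
    assume "\<exists>g \<in> carrier G. \<one> = g \<otimes> k \<and> \<psi> g \<otimes> k \<in> group_center G"
    then obtain g where g: "g \<in> carrier G" "g \<otimes> k = \<one>" "\<psi> g \<otimes> k \<in> group_center G"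
      by auto
    then have "g = inv k"
      using k by (simp add: inv_equality)
    then show "inv (\<psi> k) \<otimes> k \<in> group_center G"
      using g k by simp
  qed (use k in \<open>auto intro!: bexI[of _ "inv k"]\<close>)
  also have "\<dots> \<longleftrightarrow> k \<otimes> inv (\<psi> k) \<in> group_center G"
    using k group_center_swap by (meson inv_closed psi_closed)
  finally show ?thesis .
qed

abbreviation psi_fixed :: "'a set" where
  "psi_fixed \<equiv> {g \<in> carrier G. \<psi> g = g}"

lemma psi_fixed_subgroup: "subgroup psi_fixed G"
  by (rule subgroupI) auto

lemma kernel_Int_psi_fixed: "kernel G G \<psi> \<inter> psi_fixed \<subseteq> {\<one>}"
  unfolding kernel_def by force

lemma nu_kernel_image: "nu G \<psi> ` kernel G G \<psi> = lreg G ` kernel G G \<psi>"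
  by (intro image_cong) (auto simp: kernel_def nu_eq_lrreg lreg_eq_lrreg)

lemma nu_psi_fixed_image: "nu G \<psi> ` psi_fixed = rreg G ` psi_fixed"
proof -
  have "nu G \<psi> ` psi_fixed = rreg G ` m_inv G ` psi_fixed"
    unfolding image_image by (intro image_cong) (auto simp: nu_eq_lrreg rreg_eq_lrreg)
  then show ?thesis
    by (simp add: subgroup_image_inv[OF psi_fixed_subgroup])
qed

lemma nu_kernel_psi_fixed_image:
  "nu G \<psi> ` (kernel G G \<psi> <#> psi_fixed) = lrreg G ` (kernel G G \<psi> \<times> psi_fixed)"
proof -
  have nu_ab: "nu G \<psi> (a \<otimes> b) = lrreg G (a, inv b)" if "a \<in> kernel G G \<psi>" "b \<in> psi_fixed" for a b
    using that by (simp add: kernel_def nu_eq_lrreg m_assoc)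
  have inv_b: "inv b \<in> psi_fixed" if "b \<in> psi_fixed" for b
    using that psi_fixed_subgroup by (rule subgroup.m_inv_closed[rotated])
  show ?thesis
  proof (intro equalityI subsetI)
    fix x assume "x \<in> nu G \<psi> ` (kernel G G \<psi> <#> psi_fixed)"
    then obtain a b where "a \<in> kernel G G \<psi>" "b \<in> psi_fixed" "x = nu G \<psi> (a \<otimes> b)"
      unfolding set_mult_def by blast
    then show "x \<in> lrreg G ` (kernel G G \<psi> \<times> psi_fixed)"
      using nu_ab inv_b by blast
  next
    fix x assume "x \<in> lrreg G ` (kernel G G \<psi> \<times> psi_fixed)"
    then obtain a b where ab: "a \<in> kernel G G \<psi>" "b \<in> psi_fixed" "x = lrreg G (a, b)"
      by blast
    then have "x = nu G \<psi> (a \<otimes> inv b)"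
      using nu_ab[of a "inv b"] inv_b by simp
    moreover have "a \<otimes> inv b \<in> kernel G G \<psi> <#> psi_fixed"
      unfolding set_mult_def using ab inv_b by blast
    ultimately show "x \<in> nu G \<psi> ` (kernel G G \<psi> <#> psi_fixed)"
      by blast
  qed
qed

lemma kernel_subgroup: "subgroup (kernel G G \<psi>) G"
  by (rule group_hom.subgroup_kernel[OF group_hom_psi])

lemma nu_kernel_image_subgroup: "subgroup (nu G \<psi> ` kernel G G \<psi>) (Perm G)"
  unfolding nu_kernel_image
  by (rule group_hom.subgroup_img_is_subgroup[OF group_hom_lreg kernel_subgroup])

lemma nu_psi_fixed_image_subgroup: "subgroup (nu G \<psi> ` psi_fixed) (Perm G)"
  unfolding nu_psi_fixed_image
  by (rule group_hom.subgroup_img_is_subgroup[OF group_hom_rreg psi_fixed_subgroup])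

theorem nu_kernel_image_normal:
  "nu G \<psi> ` kernel G G \<psi> = lreg G ` kernel G G \<psi>
    \<and> subgroup (nu G \<psi> ` carrier G) (Perm G)
    \<and> nu G \<psi> ` kernel G G \<psi> \<lhd> (Perm G)\<lparr>carrier := nu G \<psi> ` carrier G\<rparr>
    \<and> (Perm G)\<lparr>carrier := nu G \<psi> ` kernel G G \<psi>\<rparr> \<cong> G\<lparr>carrier := kernel G G \<psi>\<rparr>
    \<and> normalises (Perm G) (lreg G ` carrier G) (nu G \<psi> ` kernel G G \<psi>)"
proof (intro conjI)
  have K: "kernel G G \<psi> \<lhd> G" "kernel G G \<psi> \<subseteq> carrier G"
    using group_hom.normal_kernel[OF group_hom_psi] by (auto simp: kernel_def)
  have N0: "nu G \<psi> ` kernel G G \<psi> = lrreg G ` (kernel G G \<psi> \<times> {\<one>})"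
    using K(2) by (simp add: nu_kernel_image lreg_image)
  have norm: "normalises (Perm G) (lrreg G ` (carrier G \<times> carrier G)) (nu G \<psi> ` kernel G G \<psi>)"
    unfolding N0 using K(2)
    by (intro lrreg_image_normalises normal_normalises[OF K(1)] normal_normalises[OF one_is_normal]) auto
  have "nu G \<psi> ` carrier G \<subseteq> lrreg G ` (carrier G \<times> carrier G)"
    by (auto simp: nu_eq_lrreg)
  with norm have "normalises (Perm G) (nu G \<psi> ` carrier G) (nu G \<psi> ` kernel G G \<psi>)"
    by (rule normalises_subset)
  then show "nu G \<psi> ` kernel G G \<psi> \<lhd> (Perm G)\<lparr>carrier := nu G \<psi> ` carrier G\<rparr>"
    using K(2) by (intro group.normal_in_subgroupI[OF group_BijGroup nu_image_subgroup
          nu_kernel_image_subgroup]) auto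
  show "(Perm G)\<lparr>carrier := nu G \<psi> ` kernel G G \<psi>\<rparr> \<cong> G\<lparr>carrier := kernel G G \<psi>\<rparr>"
    unfolding nu_kernel_image
    by (intro group_hom.subgroup_image_iso[OF group_hom_lreg kernel_subgroup]
        inj_on_subset[OF inj_on_lreg K(2)])
  have "lreg G ` carrier G \<subseteq> lrreg G ` (carrier G \<times> carrier G)"
    by (auto simp: lreg_eq_lrreg)
  with norm show "normalises (Perm G) (lreg G ` carrier G) (nu G \<psi> ` kernel G G \<psi>)"
    by (rule normalises_subset)
qed (rule nu_kernel_image, rule nu_image_subgroup)

theorem nu_psi_fixed_image_centralised:
  "nu G \<psi> ` psi_fixed = rreg G ` psi_fixed
    \<and> subgroup (nu G \<psi> ` psi_fixed) (Perm G) \<and> nu G \<psi> ` psi_fixed \<subseteq> nu G \<psi> ` carrier G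
    \<and> (Perm G)\<lparr>carrier := nu G \<psi> ` psi_fixed\<rparr> \<cong> G\<lparr>carrier := psi_fixed\<rparr>
    \<and> centralises (Perm G) (lreg G ` carrier G) (nu G \<psi> ` psi_fixed)"
proof (intro conjI)
  show "(Perm G)\<lparr>carrier := nu G \<psi> ` psi_fixed\<rparr> \<cong> G\<lparr>carrier := psi_fixed\<rparr>"
    unfolding nu_psi_fixed_image using inj_on_subset[OF inj_on_rreg]
    by (intro group_hom.subgroup_image_iso[OF group_hom_rreg psi_fixed_subgroup]) auto
  show "centralises (Perm G) (lreg G ` carrier G) (nu G \<psi> ` psi_fixed)"
    unfolding nu_psi_fixed_image centralises_def using lreg_rreg_commute by auto
qed (use nu_psi_fixed_image nu_psi_fixed_image_subgroup in auto)

theorem nu_kernel_psi_fixed_direct_product: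
  "nu G \<psi> ` kernel G G \<psi> <#>\<^bsub>Perm G\<^esub> nu G \<psi> ` psi_fixed = nu G \<psi> ` (kernel G G \<psi> <#> psi_fixed)
    \<and> subgroup (nu G \<psi> ` kernel G G \<psi> <#>\<^bsub>Perm G\<^esub> nu G \<psi> ` psi_fixed) (Perm G)
    \<and> nu G \<psi> ` kernel G G \<psi> <#>\<^bsub>Perm G\<^esub> nu G \<psi> ` psi_fixed \<subseteq> nu G \<psi> ` carrier G
    \<and> internal_direct_product (Perm G) (nu G \<psi> ` kernel G G \<psi> <#>\<^bsub>Perm G\<^esub> nu G \<psi> ` psi_fixed)
         (nu G \<psi> ` kernel G G \<psi>) (nu G \<psi> ` psi_fixed)
    \<and> (Perm G)\<lparr>carrier := nu G \<psi> ` kernel G G \<psi> <#>\<^bsub>Perm G\<^esub> nu G \<psi> ` psi_fixed\<rparr>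
         \<cong> G\<lparr>carrier := kernel G G \<psi>\<rparr> \<times>\<times> G\<lparr>carrier := psi_fixed\<rparr>
    \<and> normalises (Perm G) (lreg G ` carrier G)
         (nu G \<psi> ` kernel G G \<psi> <#>\<^bsub>Perm G\<^esub> nu G \<psi> ` psi_fixed)"
proof -
  let ?K = "kernel G G \<psi>" and ?F = psi_fixed
  have K: "?K \<lhd> G" "?K \<subseteq> carrier G" and F: "?F \<subseteq> carrier G"
    using group_hom.normal_kernel[OF group_hom_psi] by (auto simp: kernel_def)
  have KF: "subgroup (?K \<times> ?F) (G \<times>\<times> G)"
    by (rule DirProd_subgroups[OF is_group kernel_subgroup is_group psi_fixed_subgroup])
  have prod: "nu G \<psi> ` ?K <#>\<^bsub>Perm G\<^esub> nu G \<psi> ` ?F = lrreg G ` (?K \<times> ?F)"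
    using K(2) F by (simp add: nu_kernel_image nu_psi_fixed_image lreg_rreg_set_mult)
  have inj: "inj_on (lrreg G) (?K \<times> ?F)"
    by (rule inj_on_lrreg[OF kernel_subgroup psi_fixed_subgroup kernel_Int_psi_fixed])
  have sub: "subgroup (nu G \<psi> ` ?K <#>\<^bsub>Perm G\<^esub> nu G \<psi> ` ?F) (Perm G)"
    unfolding prod by (rule group_hom.subgroup_img_is_subgroup[OF group_hom_lrreg KF])
  have disj: "nu G \<psi> ` ?K \<inter> nu G \<psi> ` ?F \<subseteq> {\<one>\<^bsub>Perm G\<^esub>}"
  proof
    fix x assume "x \<in> nu G \<psi> ` ?K \<inter> nu G \<psi> ` ?F"
    then obtain a b where ab: "a \<in> ?K" "b \<in> ?F" "x = lrreg G (a, \<one>)" "x = lrreg G (\<one>, b)"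
      using K(2) by (auto simp: nu_kernel_image nu_psi_fixed_image lreg_eq_lrreg rreg_eq_lrreg)
    then have "(a, \<one>) = (\<one>, b)"
      using inj subgroup.one_closed[OF kernel_subgroup] subgroup.one_closed[OF psi_fixed_subgroup]
      by (auto dest: inj_onD)
    then show "x \<in> {\<one>\<^bsub>Perm G\<^esub>}"
      using ab group_hom.hom_one[OF group_hom_lrreg] by simp
  qed
  have "internal_direct_product (Perm G) (nu G \<psi> ` ?K <#>\<^bsub>Perm G\<^esub> nu G \<psi> ` ?F)
      (nu G \<psi> ` ?K) (nu G \<psi> ` ?F)"
    using K(2) F lreg_rreg_commute
    by (intro group.internal_direct_productI[OF group_BijGroup sub nu_kernel_image_subgroup
          nu_psi_fixed_image_subgroup disj]) (auto simp: nu_kernel_image nu_psi_fixed_image)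
  moreover have "(Perm G)\<lparr>carrier := lrreg G ` (?K \<times> ?F)\<rparr> \<cong> G\<lparr>carrier := ?K\<rparr> \<times>\<times> G\<lparr>carrier := ?F\<rparr>"
    using group_hom.subgroup_image_iso[OF group_hom_lrreg KF inj] by (simp add: DirProd_def)
  moreover have "normalises (Perm G) (lreg G ` carrier G) (lrreg G ` (?K \<times> ?F))"
    unfolding lreg_image[OF subset_refl] using K F normal_normalises
      subgroup_normalises[OF psi_fixed_subgroup] subgroup.one_closed[OF psi_fixed_subgroup]
    by (intro lrreg_image_normalises) auto
  moreover have "lrreg G ` (?K \<times> ?F) \<subseteq> nu G \<psi> ` carrier G"
    unfolding nu_kernel_psi_fixed_image[symmetric] using K(2) F by (intro image_mono setmult_subset_G)
  ultimately show ?thesis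
    using sub by (simp add: prod nu_kernel_psi_fixed_image)
qed

theorem regular_Int_nu_image:
  "lreg G ` carrier G \<inter> nu G \<psi> ` carrier G = {lreg G g | g. g \<in> carrier G \<and> \<psi> g \<in> group_center G}
    \<and> rreg G ` carrier G \<inter> nu G \<psi> ` carrier G
        = {rreg G g | g. g \<in> carrier G \<and> g \<otimes> inv (\<psi> g) \<in> group_center G}
    \<and> subgroup (lreg G ` carrier G \<inter> nu G \<psi> ` carrier G) (Perm G)
    \<and> lreg G ` carrier G \<inter> nu G \<psi> ` carrier G \<subseteq> nu G \<psi> ` carrier G
    \<and> subgroup (rreg G ` carrier G \<inter> nu G \<psi> ` carrier G) (Perm G)
    \<and> rreg G ` carrier G \<inter> nu G \<psi> ` carrier G \<subseteq> nu G \<psi> ` carrier G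
    \<and> normalises (Perm G) (lreg G ` carrier G) (lreg G ` carrier G \<inter> nu G \<psi> ` carrier G)
    \<and> normalises (Perm G) (lreg G ` carrier G) (rreg G ` carrier G \<inter> nu G \<psi> ` carrier G)
    \<and> centralises (Perm G) (lreg G ` carrier G) (rreg G ` carrier G \<inter> nu G \<psi> ` carrier G)"
proof (intro conjI)
  have L: "subgroup (lreg G ` carrier G) (Perm G)" and R: "subgroup (rreg G ` carrier G) (Perm G)"
    using group_hom.img_is_subgroup[OF group_hom_lreg] group_hom.img_is_subgroup[OF group_hom_rreg] .
  have N: "nu G \<psi> ` carrier G \<subseteq> carrier (Perm G)"
    using nu_in_Perm by blast
  show "lreg G ` carrier G \<inter> nu G \<psi> ` carrier G = {lreg G g | g. g \<in> carrier G \<and> \<psi> g \<in> group_center G}"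
    using lreg_in_nu_image_iff by blast
  show "rreg G ` carrier G \<inter> nu G \<psi> ` carrier G
      = {rreg G g | g. g \<in> carrier G \<and> g \<otimes> inv (\<psi> g) \<in> group_center G}"
    using rreg_in_nu_image_iff by blast
  show "subgroup (lreg G ` carrier G \<inter> nu G \<psi> ` carrier G) (Perm G)"
    "subgroup (rreg G ` carrier G \<inter> nu G \<psi> ` carrier G) (Perm G)"
    using L R nu_image_subgroup by (simp_all add: group.subgroups_Inter_pair[OF group_BijGroup])
  show "normalises (Perm G) (lreg G ` carrier G) (lreg G ` carrier G \<inter> nu G \<psi> ` carrier G)"
    using group.subgroup_normalises[OF group_BijGroup L subset_refl] lreg_normalises_nu_image N
      subgroup.subset[OF L]
    by (intro group.normalises_Int[OF group_BijGroup]) auto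
  have "normalises (Perm G) (lreg G ` carrier G) (rreg G ` carrier G)"
    unfolding lreg_image[OF subset_refl] rreg_image using normal_normalises one_is_normal
      subgroup_normalises[OF subgroup_self]
    by (intro lrreg_image_normalises) auto
  then show "normalises (Perm G) (lreg G ` carrier G) (rreg G ` carrier G \<inter> nu G \<psi> ` carrier G)"
    using lreg_normalises_nu_image N subgroup.subset[OF L] subgroup.subset[OF R]
    by (intro group.normalises_Int[OF group_BijGroup])
  show "centralises (Perm G) (lreg G ` carrier G) (rreg G ` carrier G \<inter> nu G \<psi> ` carrier G)"
    unfolding centralises_def using lreg_rreg_commute by auto
qed auto

end

theorem mainTheorem9:
  fixes G :: "('a, 'b) monoid_scheme" (structure)
    and \<psi> :: "'a \<Rightarrow> 'a"
    and N N0 N1 N01 G0 G1 :: "_ set"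
  assumes grp: "group G"
    and fin: "finite (carrier G)"
    and endo: "\<psi> \<in> hom G G"
    and hyp: "\<psi> ` comm_subgroup G (psi_comm_subgroup G \<psi>) (carrier G) \<subseteq> group_center G"
    and N_def: "N = nu G \<psi> ` carrier G"
    and G0_def: "G0 = {g \<in> carrier G. \<psi> g = \<one>}"
    and G1_def: "G1 = {g \<in> carrier G. \<psi> g = g}"
    and N0_def: "N0 = nu G \<psi> ` G0"
    and N1_def: "N1 = nu G \<psi> ` G1"
    and N01_def: "N01 = N0 <#>\<^bsub>Perm G\<^esub> N1"
  shows
    \<comment> \<open>(1)\<close>
    "(N0 = lreg G ` G0 \<and> subgroup N (Perm G) \<and> N0 \<lhd> (Perm G)\<lparr>carrier := N\<rparr>
      \<and> (Perm G)\<lparr>carrier := N0\<rparr> \<cong> G\<lparr>carrier := G0\<rparr>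
      \<and> normalises (Perm G) (lreg G ` carrier G) N0)
     \<comment> \<open>(2)\<close>
     \<and> (N1 = rreg G ` G1 \<and> subgroup N1 (Perm G) \<and> N1 \<subseteq> N
      \<and> (Perm G)\<lparr>carrier := N1\<rparr> \<cong> G\<lparr>carrier := G1\<rparr>
      \<and> centralises (Perm G) (lreg G ` carrier G) N1)
     \<comment> \<open>(3)\<close>
     \<and> (N01 = nu G \<psi> ` (G0 <#> G1) \<and> subgroup N01 (Perm G) \<and> N01 \<subseteq> N
      \<and> internal_direct_product (Perm G) N01 N0 N1
      \<and> (Perm G)\<lparr>carrier := N01\<rparr> \<cong> G\<lparr>carrier := G0\<rparr> \<times>\<times> G\<lparr>carrier := G1\<rparr>
      \<and> normalises (Perm G) (lreg G ` carrier G) N01)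
     \<comment> \<open>(4)\<close>
     \<and> (lreg G ` carrier G \<inter> N = {lreg G g | g. g \<in> carrier G \<and> \<psi> g \<in> group_center G}
      \<and> rreg G ` carrier G \<inter> N
          = {rreg G g | g. g \<in> carrier G \<and> g \<otimes> inv (\<psi> g) \<in> group_center G}
      \<and> subgroup (lreg G ` carrier G \<inter> N) (Perm G) \<and> lreg G ` carrier G \<inter> N \<subseteq> N
      \<and> subgroup (rreg G ` carrier G \<inter> N) (Perm G) \<and> rreg G ` carrier G \<inter> N \<subseteq> N
      \<and> normalises (Perm G) (lreg G ` carrier G) (lreg G ` carrier G \<inter> N)
      \<and> normalises (Perm G) (lreg G ` carrier G) (rreg G ` carrier G \<inter> N)
      \<and> centralises (Perm G) (lreg G ` carrier G) (rreg G ` carrier G \<inter> N))"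
proof -
  interpret endo_central_commutators G \<psi>
    using grp endo hyp by (simp add: endo_central_commutators_def endo_central_commutators_axioms_def)
  have G0: "G0 = kernel G G \<psi>"
    using G0_def by (simp add: kernel_def)
  show ?thesis
    unfolding N_def N0_def N1_def N01_def G0 G1_def
    using nu_kernel_image_normal nu_psi_fixed_image_centralised nu_kernel_psi_fixed_direct_product
      regular_Int_nu_image
    by blast
qed

end
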